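(* Consider EPISODE (described in the context) applied to $f=\frac1N\sum_{i=1}^N f_i$, and suppose: each $f_i$ is twice differentiable with $\|\nabla^2 f_i(x)\|\le L_0+L_1\|\nabla f_i(x)\|$ for all $x$; for all $x$, $\mathbb{E}[\nabla F_i(x;\xi_i)]=\nabla f_i(x)$ and $\|\nabla F_i(x;\xi_i)-\nabla f_i(x)\|\le\sigma$ almost surely ($\xi_i\sim\mathcal{D}_i$); and $\|\nabla f_i(x)\|\le\kappa+\rho\|\nabla f(x)\|$ for all $x,i$, with $\kappa\ge0$, $\rho\ge1$. Fix $C\ge1$ and let $A=1+e^C-\frac{e^C-1}{C}$, $B=\frac{e^C-1}{C}$. Suppose $$2\eta I\big(AL_0+BL_1\kappa+BL_1\rho(\sigma+\gamma/\eta)\big)\le1\quad\text{and}\quad\max\Big\{2\eta I\big(2\sigma+\gamma/\eta\big),\ \gamma I\Big\}\le\frac{C}{L_1}.$$ Then for any round $r$, any $i\in[N]$ and any $t$ with $t-1\in\mathcal{I}_r$, almost surely $$\mathbb{1}_{\mathcal{A}_r}\|x^i_t-\bar{x}_r\|\le 2\eta I\big(2\sigma+\gamma/\eta\big)\quad\text{and}\quad \mathbb{1}_{\bar{\mathcal{A}}_r}\|x^i_t-\bar{x}_r\|\le\gamma I.$$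
   Context: Here $f_i(x)=\mathbb{E}_{\xi_i\sim\mathcal{D}_i}[F_i(x;\xi_i)]$. EPISODE with $N$ clients, communication interval $I\ge1$, step size $\eta>0$, clipping parameter $\gamma>0$: let $t_r=rI$ and $\mathcal{I}_r=\{t_r,\dots,t_{r+1}-1\}$; $\bar{x}_0=x_0$. At the start of round $r$, every client sets $x^i_{t_r}=\bar{x}_r$; each client draws a fresh $\tilde\xi^i_r\sim\mathcal{D}_i$, sets $G^i_r=\nabla F_i(\bar{x}_r;\tilde\xi^i_r)$, and $G_r=\frac1N\sum_i G^i_r$. The event $\mathcal{A}_r=\{\|G_r\|\le\gamma/\eta\}$ and $\bar{\mathcal{A}}_r$ is its complement. For $t\in\mathcal{I}_r$, client $i$ draws fresh $\xi^i_t\sim\mathcal{D}_i$, sets $g^i_t=\nabla F_i(x^i_t;\xi^i_t)-G^i_r+G_r$, and updates $x^i_{t+1}=x^i_t-\eta g^i_t$ on $\mathcal{A}_r$, and $x^i_{t+1}=x^i_t-\gamma g^i_t/\|g^i_t\|$ on $\bar{\mathcal{A}}_r$. Then $\bar{x}_{r+1}=\frac1N\sum_i x^i_{t_{r+1}}$. All samples are independent. $\mathbb{1}_E$ denotes the indicator of event $E$. *)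

theory Defs
  imports "HOL-Probability.Probability"
begin

text \<open>Clients are indexed by i < N. xt r i is the sample drawn by client i at the start
  of round r (for G^i_r), xs t i is the sample drawn by client i at local step t.
  gF i x s is the stochastic gradient of F_i at x with sample s.\<close>

definition epi_G ::
  "nat \<Rightarrow> (nat \<Rightarrow> 'a::real_normed_vector \<Rightarrow> 'b \<Rightarrow> 'a) \<Rightarrow> (nat \<Rightarrow> nat \<Rightarrow> 'b) \<Rightarrow> nat \<Rightarrow> 'a \<Rightarrow> 'a" where
  "epi_G N gF xt r xb = (1 / real N) *\<^sub>R (\<Sum>i<N. gF i xb (xt r i))"

text \<open>epi_loc ... r xb i k is the local iterate x^i_{rI+k} of client i in round r,
  for k = 0..I, where xb is the round-start average xbar_r.\<close>
fun epi_loc ::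
  "nat \<Rightarrow> nat \<Rightarrow> real \<Rightarrow> real \<Rightarrow> (nat \<Rightarrow> 'a::real_normed_vector \<Rightarrow> 'b \<Rightarrow> 'a) \<Rightarrow>
   (nat \<Rightarrow> nat \<Rightarrow> 'b) \<Rightarrow> (nat \<Rightarrow> nat \<Rightarrow> 'b) \<Rightarrow> nat \<Rightarrow> 'a \<Rightarrow> nat \<Rightarrow> nat \<Rightarrow> 'a" where
  "epi_loc N I \<eta> \<gamma> gF xt xs r xb i 0 = xb"
| "epi_loc N I \<eta> \<gamma> gF xt xs r xb i (Suc k) =
    (let y = epi_loc N I \<eta> \<gamma> gF xt xs r xb i k;
         Gr = epi_G N gF xt r xb;
         g = gF i y (xs (r * I + k) i) - gF i xb (xt r i) + Gr
     in if norm Gr \<le> \<gamma> / \<eta> then y - \<eta> *\<^sub>R g else y - (\<gamma> / norm g) *\<^sub>R g)"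

primrec epi_xbar ::
  "nat \<Rightarrow> nat \<Rightarrow> real \<Rightarrow> real \<Rightarrow> (nat \<Rightarrow> 'a::real_normed_vector \<Rightarrow> 'b \<Rightarrow> 'a) \<Rightarrow>
   (nat \<Rightarrow> nat \<Rightarrow> 'b) \<Rightarrow> (nat \<Rightarrow> nat \<Rightarrow> 'b) \<Rightarrow> 'a \<Rightarrow> nat \<Rightarrow> 'a" where
  "epi_xbar N I \<eta> \<gamma> gF xt xs x0 0 = x0"
| "epi_xbar N I \<eta> \<gamma> gF xt xs x0 (Suc r) =
    (1 / real N) *\<^sub>R (\<Sum>i<N. epi_loc N I \<eta> \<gamma> gF xt xs r (epi_xbar N I \<eta> \<gamma> gF xt xs x0 r) i I)"

end

theory Submission
  imports Defs
begin

text \<open>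
  On the event \<open>\<A>\<^sub>r\<close> a local step of client \<open>i\<close> from \<open>x\<close> is \<open>\<eta>\<close> times
  \<open>(\<nabla>F\<^sub>i(x;\<xi>) - \<nabla>f\<^sub>i(x)) + (\<nabla>f\<^sub>i(x) - \<nabla>f\<^sub>i(x\<^sub>r)) - (G\<^sup>i\<^sub>r - \<nabla>f\<^sub>i(x\<^sub>r)) + G\<^sub>r\<close>:
  two noise terms of norm at most \<open>\<sigma>\<close>, the gradient drift, and \<open>G\<^sub>r\<close> of norm at most \<open>\<gamma>/\<eta>\<close>.
  Integrating the (L0,L1)-smoothness bound along a segment (a Gronwall argument) bounds the drift by
  \<open>(e\<^sup>C - 1)/C (L0 + L1 \<parallel>\<nabla>f\<^sub>i(x\<^sub>r)\<parallel>) \<parallel>x - x\<^sub>r\<parallel>\<close> while \<open>L1 \<parallel>x - x\<^sub>r\<parallel> \<le> C\<close>; the heterogeneity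
  bound at \<open>x\<^sub>r\<close> and the first step-size condition make this at most \<open>2\<sigma> + \<gamma>/\<eta>\<close> inside the
  ball of radius \<open>2\<eta>I(2\<sigma> + \<gamma>/\<eta>)\<close>. So every step has length at most \<open>2\<eta>(2\<sigma> + \<gamma>/\<eta>)\<close>,
  and by induction the iterate never leaves the ball. Off \<open>\<A>\<^sub>r\<close> every step is clipped to length \<open>\<gamma>\<close>.
  The noise bounds are needed at random points: they hold almost surely because each sample is
  independent of the point where it is used, a measurable function of earlier samples.
\<close>

section \<open>Gradient growth under (L0,L1)-smoothness\<close>

lemma has_real_derivative_sqrt_smoothed_norm:
  fixes w :: "real \<Rightarrow> 'a::real_inner"
  assumes w: "(w has_vector_derivative w') (at s)" and e: "e \<noteq> 0"
  shows "((\<lambda>s. sqrt (e\<^sup>2 + w s \<bullet> w s)) has_real_derivative (w s \<bullet> w') / sqrt (e\<^sup>2 + w s \<bullet> w s)) (at s)"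
proof -
  have pos: "0 < e\<^sup>2 + w s \<bullet> w s" using e by (intro add_pos_nonneg) auto
  from w have "(w has_derivative (\<lambda>h. h *\<^sub>R w')) (at s)"
    by (simp add: has_vector_derivative_def)
  from has_derivative_inner[OF this this]
  have "((\<lambda>s. w s \<bullet> w s) has_real_derivative 2 * (w s \<bullet> w')) (at s)"
    by (simp add: has_field_derivative_def inner_commute algebra_simps mult_commute_abs)
  then have "((\<lambda>s. e\<^sup>2 + w s \<bullet> w s) has_real_derivative 2 * (w s \<bullet> w')) (at s)"
    by (auto intro!: derivative_eq_intros)
  from DERIV_chain2[OF DERIV_real_sqrt[OF pos] this] pos
  show ?thesis by (simp add: field_simps)
qed

lemma norm_diff_le_gronwall_eps:
  fixes G G' :: "real \<Rightarrow> 'a::real_inner"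
  assumes deriv: "\<And>s. 0 \<le> s \<Longrightarrow> s \<le> 1 \<Longrightarrow> (G has_vector_derivative G' s) (at s)"
    and growth: "\<And>s. 0 \<le> s \<Longrightarrow> s \<le> 1 \<Longrightarrow> norm (G' s) \<le> a + b * norm (G s - G 0)"
    and b: "b > 0" and e: "e > 0"
  shows "norm (G 1 - G 0) \<le> exp b * e + a * (exp b - 1) / b"
proof -
  define w where "w s = G s - G 0" for s
  \<comment> \<open>a smooth majorant of \<open>norm (w s)\<close>; the norm itself is not differentiable where \<open>w\<close> vanishes\<close>
  define v where "v s = sqrt (e\<^sup>2 + w s \<bullet> w s)" for s
  define \<psi> where "\<psi> s = exp (- b * s) * (b * v s + a)" for s
  have v_pos: "v s > 0" for s
    unfolding v_def using e by (intro real_sqrt_gt_zero add_pos_nonneg) auto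
  have norm_w_le: "norm (w s) \<le> v s" for s
    unfolding v_def by (rule real_le_rsqrt) (simp add: power2_norm_eq_inner)
  have v_deriv: "(v has_real_derivative (w s \<bullet> G' s) / v s) (at s)"
    if "0 \<le> s" "s \<le> 1" for s
  proof -
    have "(w has_vector_derivative G' s) (at s)"
      unfolding w_def using has_vector_derivative_diff[OF deriv[OF that] has_vector_derivative_const]
      by simp
    then show ?thesis
      unfolding v_def by (rule has_real_derivative_sqrt_smoothed_norm) (use e in simp)
  qed
  have v_deriv_le: "(w s \<bullet> G' s) / v s \<le> a + b * v s" if "0 \<le> s" "s \<le> 1" for s
  proof -
    have "w s \<bullet> G' s \<le> v s * norm (G' s)"
      using norm_cauchy_schwarz[of "w s" "G' s"] norm_w_le[of s] by (meson mult_right_mono norm_ge_zero order_trans)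
    then have "(w s \<bullet> G' s) / v s \<le> norm (G' s)"
      using v_pos[of s] by (simp add: divide_le_eq mult.commute)
    also have "\<dots> \<le> a + b * v s"
      using growth[OF that] mult_left_mono[OF norm_w_le[of s], of b] b unfolding w_def by linarith
    finally show ?thesis .
  qed
  have "\<psi> 1 \<le> \<psi> 0"
  proof (rule DERIV_nonpos_imp_nonincreasing[of 0 1])
    fix s :: real assume s: "0 \<le> s" "s \<le> 1"
    have "(\<psi> has_real_derivative exp (- b * s) * b * ((w s \<bullet> G' s) / v s - (b * v s + a))) (at s)"
      unfolding \<psi>_def by (auto intro!: derivative_eq_intros v_deriv[OF s] simp: algebra_simps)
    moreover have "exp (- b * s) * b * ((w s \<bullet> G' s) / v s - (b * v s + a)) \<le> 0"
      using v_deriv_le[OF s] b by (intro mult_nonneg_nonpos) auto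
    ultimately show "\<exists>y. (\<psi> has_real_derivative y) (at s) \<and> y \<le> 0" by blast
  qed simp
  then have "b * v 1 + a \<le> exp b * (b * e + a)"
    using e by (simp add: \<psi>_def v_def w_def exp_minus field_simps)
  then have "v 1 \<le> exp b * e + a * (exp b - 1) / b"
    using b by (simp add: field_simps)
  then show ?thesis using norm_w_le[of 1] by (simp add: w_def)
qed

lemma norm_diff_le_gronwall:
  fixes G G' :: "real \<Rightarrow> 'a::real_inner"
  assumes "\<And>s. 0 \<le> s \<Longrightarrow> s \<le> 1 \<Longrightarrow> (G has_vector_derivative G' s) (at s)"
    and "\<And>s. 0 \<le> s \<Longrightarrow> s \<le> 1 \<Longrightarrow> norm (G' s) \<le> a + b * norm (G s - G 0)"
    and "b > 0"
  shows "norm (G 1 - G 0) \<le> a * (exp b - 1) / b"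
proof (rule field_le_epsilon)
  fix e :: real assume "e > 0"
  with norm_diff_le_gronwall_eps[OF assms, of "e / exp b"]
  show "norm (G 1 - G 0) \<le> a * (exp b - 1) / b + e" by simp
qed

lemma norm_diff_le_exp_of_onorm_deriv_le:
  fixes g :: "'a::real_normed_vector \<Rightarrow> 'b::real_inner"
  assumes deriv: "\<And>x. (g has_derivative H x) (at x)"
    and smooth: "\<And>x. onorm (H x) \<le> L0 + L1 * norm (g x)"
    and L1: "L1 > 0"
  shows "norm (g x - g y) \<le> (L0 + L1 * norm (g y)) * (exp (L1 * norm (x - y)) - 1) / L1"
proof (cases "x = y")
  case False
  define d where "d = norm (x - y)"
  have d: "d > 0" using False by (simp add: d_def)
  define z where "z s = y + s *\<^sub>R (x - y)" for s :: real
  have "norm (g (z 1) - g (z 0)) \<le> ((L0 + L1 * norm (g y)) * d) * (exp (L1 * d) - 1) / (L1 * d)"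
  proof (rule norm_diff_le_gronwall[where G'="\<lambda>s. H (z s) (x - y)"])
    fix s :: real
    have "(z has_derivative (\<lambda>h. h *\<^sub>R (x - y))) (at s)"
      unfolding z_def by (auto intro!: derivative_eq_intros)
    from has_derivative_compose[OF this deriv]
    show "((\<lambda>s. g (z s)) has_vector_derivative H (z s) (x - y)) (at s)"
      using has_derivative_bounded_linear[OF deriv]
      by (simp add: has_vector_derivative_def linear_simps(5) o_def)
    have "norm (H (z s) (x - y)) \<le> onorm (H (z s)) * d"
      unfolding d_def by (rule onorm[OF has_derivative_bounded_linear[OF deriv]])
    also have "\<dots> \<le> (L0 + L1 * (norm (g y) + norm (g (z s) - g (z 0)))) * d"
      using smooth[of "z s"] norm_triangle_sub[of "g (z s)" "g y"] d L1
      by (intro mult_right_mono order.trans[OF smooth] add_left_mono mult_left_mono)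
        (auto simp: z_def)
    finally show "norm (H (z s) (x - y)) \<le> (L0 + L1 * norm (g y)) * d + L1 * d * norm (g (z s) - g (z 0))"
      by (simp add: algebra_simps)
  qed (use L1 d in simp)
  then show ?thesis using d by (simp add: z_def d_def)
qed simp

lemma exp_minus_one_le_chord:
  fixes z C :: real
  assumes "0 \<le> z" "z \<le> C"
  shows "exp z - 1 \<le> z / C * (exp C - 1)"
proof (cases "C = 0")
  case False
  then have t: "0 \<le> z / C" "z / C \<le> 1" and z: "(1 - z / C) * 0 + (z / C) * C = z"
    using assms by auto
  from convex_onD[OF exp_convex t(1,2), of 0 C] show ?thesis
    using False by (simp add: z algebra_simps)
qed (use assms in simp)

lemma exp_minus_one_le_trapezoid:
  fixes C :: real
  assumes "0 \<le> C"
  shows "2 * (exp C - 1) \<le> C * (1 + exp C)"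
proof -
  define h where "h c = c * (1 + exp c) - 2 * (exp c - 1)" for c :: real
  have "h 0 \<le> h C"
  proof (rule DERIV_nonneg_imp_nondecreasing[OF assms])
    fix c :: real
    have "(h has_real_derivative 1 - exp c * (1 - c)) (at c)"
      unfolding h_def by (auto intro!: derivative_eq_intros simp: algebra_simps)
    moreover have "exp c * (1 - c) \<le> 1"
      using mult_left_mono[OF exp_ge_add_one_self[of "- c"], of "exp c"] by (simp add: exp_minus)
    ultimately show "\<exists>y. (h has_real_derivative y) (at c) \<and> 0 \<le> y" by auto
  qed
  then show ?thesis by (simp add: h_def)
qed

lemma norm_diff_le_of_onorm_deriv_le_local:
  fixes g :: "'a::real_normed_vector \<Rightarrow> 'b::real_inner"
  assumes deriv: "\<And>x. (g has_derivative H x) (at x)"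
    and smooth: "\<And>x. onorm (H x) \<le> L0 + L1 * norm (g x)"
    and L1: "L1 > 0" and near: "L1 * norm (x - y) \<le> C"
  shows "norm (g x - g y) \<le> (exp C - 1) / C * (L0 + L1 * norm (g y)) * norm (x - y)"
proof -
  have nonneg: "0 \<le> L0 + L1 * norm (g y)"
    using onorm_pos_le[OF has_derivative_bounded_linear[OF deriv]] smooth order_trans by blast
  have "norm (g x - g y) \<le> (L0 + L1 * norm (g y)) * (exp (L1 * norm (x - y)) - 1) / L1"
    by (rule norm_diff_le_exp_of_onorm_deriv_le[OF deriv smooth L1])
  also have "\<dots> \<le> (L0 + L1 * norm (g y)) * (L1 * norm (x - y) / C * (exp C - 1)) / L1"
    using exp_minus_one_le_chord[OF _ near] nonneg L1
    by (intro divide_right_mono mult_left_mono) auto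
  also have "\<dots> = (exp C - 1) / C * (L0 + L1 * norm (g y)) * norm (x - y)"
    using L1 by simp
  finally show ?thesis .
qed

section \<open>Deviation of the local iterates\<close>

lemma norm_diff_start_le_of_steps:
  fixes x :: "nat \<Rightarrow> 'a::real_normed_vector"
  assumes c: "0 \<le> c"
    and step: "\<And>m. m < k \<Longrightarrow> norm (x m - x 0) \<le> c * real k \<Longrightarrow> norm (x (Suc m) - x m) \<le> c"
  shows "norm (x k - x 0) \<le> c * real k"
proof -
  have "norm (x m - x 0) \<le> c * real m" if "m \<le> k" for m
    using that
  proof (induction m)
    case (Suc m)
    have "norm (x m - x 0) \<le> c * real k"
      using Suc c by (meson Suc_leD mult_left_mono of_nat_le_iff order_trans)
    then have "norm (x (Suc m) - x m) \<le> c"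
      using Suc.prems by (intro step) auto
    then show ?case
      using Suc norm_triangle_ineq[of "x (Suc m) - x m" "x m - x 0"] by (simp add: algebra_simps)
  qed simp
  then show ?thesis by simp
qed

lemma epi_loc_Suc_unclipped:
  assumes "norm (epi_G N gF xt r xb) \<le> \<gamma> / \<eta>"
  shows "epi_loc N I \<eta> \<gamma> gF xt xs r xb i (Suc k) = epi_loc N I \<eta> \<gamma> gF xt xs r xb i k
    - \<eta> *\<^sub>R (gF i (epi_loc N I \<eta> \<gamma> gF xt xs r xb i k) (xs (r * I + k) i) - gF i xb (xt r i)
              + epi_G N gF xt r xb)"
  using assms by (simp add: Let_def)

lemma norm_epi_loc_step_clipped:
  assumes "\<not> norm (epi_G N gF xt r xb) \<le> \<gamma> / \<eta>" "0 \<le> \<gamma>"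
  shows "norm (epi_loc N I \<eta> \<gamma> gF xt xs r xb i (Suc k) - epi_loc N I \<eta> \<gamma> gF xt xs r xb i k) \<le> \<gamma>"
  using assms by (auto simp: Let_def)

lemma norm_epi_loc_diff_clipped:
  assumes "\<not> norm (epi_G N gF xt r xb) \<le> \<gamma> / \<eta>" "0 \<le> \<gamma>"
  shows "norm (epi_loc N I \<eta> \<gamma> gF xt xs r xb i k - xb) \<le> \<gamma> * real k"
  using norm_diff_start_le_of_steps[where x = "epi_loc N I \<eta> \<gamma> gF xt xs r xb i"]
    norm_epi_loc_step_clipped[OF assms] assms(2) by simp

lemma norm_mean_le_mean_plus:
  fixes u v :: "nat \<Rightarrow> 'a::real_normed_vector"
  assumes "\<And>l. l < N \<Longrightarrow> norm (u l - v l) \<le> \<sigma>" "0 \<le> \<sigma>"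
  shows "norm ((1 / real N) *\<^sub>R (\<Sum>l<N. u l)) \<le> \<sigma> + norm ((1 / real N) *\<^sub>R (\<Sum>l<N. v l))"
proof -
  have "norm (\<Sum>l<N. u l - v l) \<le> real N * \<sigma>"
    using norm_sum[of "\<lambda>l. u l - v l" "{..<N}"] sum_mono[of "{..<N}" "\<lambda>l. norm (u l - v l)" "\<lambda>_. \<sigma>"]
      assms(1) by simp
  then have "norm ((1 / real N) *\<^sub>R (\<Sum>l<N. u l - v l)) \<le> \<sigma>"
    using assms(2) by (cases "N = 0") (auto simp: field_simps)
  then show ?thesis
    using norm_triangle_ineq[of "(1 / real N) *\<^sub>R (\<Sum>l<N. u l - v l)" "(1 / real N) *\<^sub>R (\<Sum>l<N. v l)"]
    by (simp add: sum_subtractf scaleR_diff_right)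
qed

lemma norm_gradient_diff_le_in_round:
  fixes gF :: "nat \<Rightarrow> 'a::real_inner \<Rightarrow> 'b \<Rightarrow> 'a" and gf :: "nat \<Rightarrow> 'a \<Rightarrow> 'a"
  assumes eta: "\<eta> > 0" and L0: "L0 \<ge> 0" and L1: "L1 > 0" and rho: "\<rho> \<ge> 0" and C: "C > 0"
    and deriv: "\<And>x. (gf i has_derivative Hf x) (at x)"
    and smooth: "\<And>x. onorm (Hf x) \<le> L0 + L1 * norm (gf i x)"
    and hetero: "norm (gf i xb) \<le> \<kappa> + \<rho> * norm ((1 / real N) *\<^sub>R (\<Sum>l<N. gf l xb))"
    and cond1: "2 * \<eta> * real I * ((1 + exp C - (exp C - 1) / C) * L0
                 + ((exp C - 1) / C) * L1 * \<kappa>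
                 + ((exp C - 1) / C) * L1 * \<rho> * (\<sigma> + \<gamma> / \<eta>)) \<le> 1"
    and cond2: "2 * \<eta> * real I * (2 * \<sigma> + \<gamma> / \<eta>) \<le> C / L1"
    and i: "i < N"
    and noise_start: "\<And>j. j < N \<Longrightarrow> norm (gF j xb (xt r j) - gf j xb) \<le> \<sigma>"
    and unclipped: "norm (epi_G N gF xt r xb) \<le> \<gamma> / \<eta>"
    and near: "norm (y - xb) \<le> 2 * \<eta> * real I * (2 * \<sigma> + \<gamma> / \<eta>)"
  shows "norm (gf i y - gf i xb) \<le> 2 * \<sigma> + \<gamma> / \<eta>"
proof -
  define S where "S = 2 * \<sigma> + \<gamma> / \<eta>"
  define A where "A = 1 + exp C - (exp C - 1) / C"
  define B where "B = (exp C - 1) / C"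
  have \<sigma>: "0 \<le> \<sigma>" using noise_start[OF i] norm_ge_zero order_trans by blast
  have S: "0 \<le> S" using \<sigma> order_trans[OF norm_ge_zero unclipped] by (simp add: S_def)
  have "2 * (exp C - 1) / C \<le> 1 + exp C"
    using exp_minus_one_le_trapezoid[of C] C by (simp add: pos_divide_le_eq mult.commute)
  then have B: "0 \<le> B" "B \<le> A"
    using C by (auto simp: A_def B_def)
  have "norm ((1 / real N) *\<^sub>R (\<Sum>l<N. gf l xb)) \<le> \<sigma> + \<gamma> / \<eta>"
    using norm_mean_le_mean_plus[of N "\<lambda>l. gf l xb" "\<lambda>l. gF l xb (xt r l)", OF _ \<sigma>] noise_start unclipped
    by (force simp: epi_G_def norm_minus_commute)
  then have "norm (gf i xb) \<le> \<kappa> + \<rho> * (\<sigma> + \<gamma> / \<eta>)"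
    using hetero mult_left_mono[OF _ rho] by (meson add_left_mono order_trans)
  then have "B * L1 * norm (gf i xb) \<le> B * L1 * (\<kappa> + \<rho> * (\<sigma> + \<gamma> / \<eta>))"
    using B L1 by (intro mult_left_mono) auto
  then have "B * (L0 + L1 * norm (gf i xb)) \<le> A * L0 + B * L1 * \<kappa> + B * L1 * \<rho> * (\<sigma> + \<gamma> / \<eta>)"
    using mult_right_mono[OF B(2) L0] by (simp add: algebra_simps)
  then have budget: "2 * \<eta> * real I * (B * (L0 + L1 * norm (gf i xb))) \<le> 1"
    using cond1 eta unfolding A_def B_def by (meson mult_left_mono order_trans mult_nonneg_nonneg
        of_nat_0_le_iff less_imp_le zero_le_numeral)
  have "norm (y - xb) \<le> C / L1"
    using near cond2 by simp
  then have "L1 * norm (y - xb) \<le> C"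
    using L1 by (simp add: pos_le_divide_eq mult.commute)
  then have "norm (gf i y - gf i xb) \<le> B * (L0 + L1 * norm (gf i xb)) * norm (y - xb)"
    unfolding B_def by (rule norm_diff_le_of_onorm_deriv_le_local[OF deriv smooth L1])
  also have "\<dots> \<le> B * (L0 + L1 * norm (gf i xb)) * (2 * \<eta> * real I * S)"
    using near B L0 L1 by (intro mult_left_mono) (auto simp: S_def)
  also have "\<dots> = S * (2 * \<eta> * real I * (B * (L0 + L1 * norm (gf i xb))))"
    by (simp only: mult_ac)
  also have "\<dots> \<le> S"
    by (rule mult_left_le[OF budget S])
  finally show ?thesis by (simp add: S_def)
qed

lemma norm_epi_loc_diff_unclipped:
  fixes gF :: "nat \<Rightarrow> 'a::real_normed_vector \<Rightarrow> 'b \<Rightarrow> 'a" and gf :: "nat \<Rightarrow> 'a \<Rightarrow> 'a"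
  assumes eta: "\<eta> > 0" and i: "i < N" and k: "k \<le> I"
    and noise_start: "\<And>j. j < N \<Longrightarrow> norm (gF j xb (xt r j) - gf j xb) \<le> \<sigma>"
    and noise_local: "\<And>m. m < k \<Longrightarrow>
      norm (gF i (epi_loc N I \<eta> \<gamma> gF xt xs r xb i m) (xs (r * I + m) i)
            - gf i (epi_loc N I \<eta> \<gamma> gF xt xs r xb i m)) \<le> \<sigma>"
    and unclipped: "norm (epi_G N gF xt r xb) \<le> \<gamma> / \<eta>"
    and gradient_close: "\<And>y. norm (y - xb) \<le> 2 * \<eta> * real I * (2 * \<sigma> + \<gamma> / \<eta>) \<Longrightarrow>
      norm (gf i y - gf i xb) \<le> 2 * \<sigma> + \<gamma> / \<eta>"
  shows "norm (epi_loc N I \<eta> \<gamma> gF xt xs r xb i k - xb) \<le> 2 * \<eta> * real I * (2 * \<sigma> + \<gamma> / \<eta>)"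
proof -
  let ?x = "epi_loc N I \<eta> \<gamma> gF xt xs r xb i" and ?G = "epi_G N gF xt r xb"
  define S where "S = 2 * \<sigma> + \<gamma> / \<eta>"
  have "0 \<le> \<sigma>" using noise_start[OF i] norm_ge_zero order_trans by blast
  then have S: "0 \<le> S" using order_trans[OF norm_ge_zero unclipped] by (simp add: S_def)
  have "norm (?x k - ?x 0) \<le> 2 * \<eta> * S * real k"
  proof (rule norm_diff_start_le_of_steps)
    fix m assume m: "m < k" and near: "norm (?x m - ?x 0) \<le> 2 * \<eta> * S * real k"
    let ?g = "gF i (?x m) (xs (r * I + m) i) - gF i xb (xt r i) + ?G"
    have "norm (?x m - xb) \<le> 2 * \<eta> * real I * S"
      using near k eta S by (simp add: mult.commute mult.left_commute order_trans mult_left_mono)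
    then have "norm (gf i (?x m) - gf i xb) \<le> S" unfolding S_def by (rule gradient_close)
    moreover have "?g = (gF i (?x m) (xs (r * I + m) i) - gf i (?x m)) + (gf i (?x m) - gf i xb)
                       - (gF i xb (xt r i) - gf i xb) + ?G"
      by simp
    ultimately have "norm ?g \<le> 2 * S"
      using noise_local[OF m] noise_start[OF i] unclipped
        norm_triangle_ineq[of "gF i (?x m) (xs (r * I + m) i) - gf i (?x m)" "gf i (?x m) - gf i xb"]
        norm_triangle_ineq4[of "(gF i (?x m) (xs (r * I + m) i) - gf i (?x m)) + (gf i (?x m) - gf i xb)"
          "gF i xb (xt r i) - gf i xb"]
        norm_triangle_ineq[of "(gF i (?x m) (xs (r * I + m) i) - gf i (?x m)) + (gf i (?x m) - gf i xb)
          - (gF i xb (xt r i) - gf i xb)" ?G]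
      by (simp add: S_def)
    then show "norm (?x (Suc m) - ?x m) \<le> 2 * \<eta> * S"
      using epi_loc_Suc_unclipped[OF unclipped] eta by simp
  qed (use eta S in simp)
  also have "\<dots> \<le> 2 * \<eta> * real I * S"
    using k eta S by (simp add: mult.commute mult.left_commute mult_left_mono)
  finally show ?thesis by (simp add: S_def)
qed

lemma norm_epi_loc_diff_le:
  fixes gF :: "nat \<Rightarrow> 'a::real_inner \<Rightarrow> 'b \<Rightarrow> 'a" and gf :: "nat \<Rightarrow> 'a \<Rightarrow> 'a"
  assumes eta: "\<eta> > 0" and gamma: "\<gamma> \<ge> 0" and L0: "L0 \<ge> 0" and L1: "L1 > 0"
    and rho: "\<rho> \<ge> 0" and C: "C > 0"
    and deriv: "\<And>x. (gf i has_derivative Hf x) (at x)"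
    and smooth: "\<And>x. onorm (Hf x) \<le> L0 + L1 * norm (gf i x)"
    and hetero: "norm (gf i xb) \<le> \<kappa> + \<rho> * norm ((1 / real N) *\<^sub>R (\<Sum>l<N. gf l xb))"
    and cond1: "2 * \<eta> * real I * ((1 + exp C - (exp C - 1) / C) * L0
                 + ((exp C - 1) / C) * L1 * \<kappa>
                 + ((exp C - 1) / C) * L1 * \<rho> * (\<sigma> + \<gamma> / \<eta>)) \<le> 1"
    and cond2: "2 * \<eta> * real I * (2 * \<sigma> + \<gamma> / \<eta>) \<le> C / L1"
    and i: "i < N" and k: "k \<le> I"
    and noise_start: "\<And>j. j < N \<Longrightarrow> norm (gF j xb (xt r j) - gf j xb) \<le> \<sigma>"
    and noise_local: "\<And>m. m < k \<Longrightarrow>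
      norm (gF i (epi_loc N I \<eta> \<gamma> gF xt xs r xb i m) (xs (r * I + m) i)
            - gf i (epi_loc N I \<eta> \<gamma> gF xt xs r xb i m)) \<le> \<sigma>"
  shows "of_bool (norm (epi_G N gF xt r xb) \<le> \<gamma> / \<eta>) * norm (epi_loc N I \<eta> \<gamma> gF xt xs r xb i k - xb)
           \<le> 2 * \<eta> * real I * (2 * \<sigma> + \<gamma> / \<eta>)
       \<and> of_bool (\<not> norm (epi_G N gF xt r xb) \<le> \<gamma> / \<eta>) * norm (epi_loc N I \<eta> \<gamma> gF xt xs r xb i k - xb)
           \<le> \<gamma> * real I"
proof (cases "norm (epi_G N gF xt r xb) \<le> \<gamma> / \<eta>")
  case unclipped: True
  have "norm (epi_loc N I \<eta> \<gamma> gF xt xs r xb i k - xb) \<le> 2 * \<eta> * real I * (2 * \<sigma> + \<gamma> / \<eta>)"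
  proof (rule norm_epi_loc_diff_unclipped[OF eta i k noise_start noise_local unclipped])
    fix y assume near: "norm (y - xb) \<le> 2 * \<eta> * real I * (2 * \<sigma> + \<gamma> / \<eta>)"
    from norm_gradient_diff_le_in_round[OF eta L0 L1 rho C deriv smooth hetero cond1 cond2 i
            noise_start unclipped near]
    show "norm (gf i y - gf i xb) \<le> 2 * \<sigma> + \<gamma> / \<eta>" .
  qed
  with unclipped gamma show ?thesis by simp
next
  case clipped: False
  have "0 \<le> \<sigma>" using noise_start[OF i] norm_ge_zero order_trans by blast
  moreover have "norm (epi_loc N I \<eta> \<gamma> gF xt xs r xb i k - xb) \<le> \<gamma> * real I"
    using norm_epi_loc_diff_clipped[OF clipped gamma] k gamma
    by (meson mult_left_mono of_nat_mono order_trans)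
  ultimately show ?thesis using clipped eta gamma by simp
qed

section \<open>Measurability of Caratheodory functions and their gradients\<close>

definition grid_round :: "nat \<Rightarrow> 'a::euclidean_space \<Rightarrow> 'a" where
  "grid_round n x = (\<Sum>b\<in>Basis. (real_of_int \<lfloor>real (Suc n) * (x \<bullet> b)\<rfloor> / real (Suc n)) *\<^sub>R b)"

lemma countable_range_grid_round: "countable (range (grid_round n :: 'a::euclidean_space \<Rightarrow> 'a))"
proof -
  let ?lattice = "(\<lambda>z. \<Sum>b\<in>Basis. (real_of_int (z b) / real (Suc n)) *\<^sub>R b) ` (Basis \<rightarrow>\<^sub>E (UNIV :: int set)) :: 'a set"
  have "range (grid_round n) \<subseteq> ?lattice"
  proof
    fix y assume "y \<in> range (grid_round n :: 'a \<Rightarrow> 'a)"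
    then obtain x where x: "y = grid_round n x" by auto
    show "y \<in> ?lattice"
      by (rule image_eqI[of _ _ "restrict (\<lambda>b. \<lfloor>real (Suc n) * (x \<bullet> b)\<rfloor>) Basis"])
         (auto simp: x grid_round_def intro!: sum.cong)
  qed
  moreover have "countable ?lattice" by (intro countable_image countable_PiE) auto
  ultimately show ?thesis by (rule countable_subset)
qed

lemma grid_round_measurable_count_space:
  "grid_round n \<in> measurable borel (count_space (range (grid_round n :: 'a::euclidean_space \<Rightarrow> 'a)))"
proof -
  have "grid_round n \<in> borel_measurable (borel :: 'a measure)"
    unfolding grid_round_def by measurable
  from measurable_sets[OF this, of "{a}" for a] show ?thesis
    by (auto simp: measurable_count_space_eq_countable[OF countable_range_grid_round])
qed

lemma grid_round_tendsto: "(\<lambda>n. grid_round n x) \<longlonglongrightarrow> (x::'a::euclidean_space)"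
proof (rule LIM_zero_cancel, rule Lim_null_comparison)
  show "(\<lambda>n. real DIM('a) / real (Suc n)) \<longlonglongrightarrow> 0"
    using LIMSEQ_Suc[OF lim_const_over_n[of "real DIM('a)"]] by simp
  show "\<forall>\<^sub>F n in sequentially. norm (grid_round n x - x) \<le> real DIM('a) / real (Suc n)"
  proof (intro always_eventually allI)
    fix n
    let ?c = "real (Suc n)"
    have "norm (grid_round n x - x) = norm (\<Sum>b\<in>Basis. (real_of_int \<lfloor>?c * (x \<bullet> b)\<rfloor> / ?c - x \<bullet> b) *\<^sub>R b)"
      by (subst (2) euclidean_representation[symmetric])
        (simp add: grid_round_def sum_subtractf scaleR_diff_left)
    also have "\<dots> \<le> (\<Sum>b\<in>(Basis::'a set). \<bar>real_of_int \<lfloor>?c * (x \<bullet> b)\<rfloor> / ?c - x \<bullet> b\<bar>)"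
      by (rule order.trans[OF norm_sum]) simp
    also have "\<dots> \<le> (\<Sum>b\<in>(Basis::'a set). 1 / ?c)"
    proof (rule sum_mono)
      fix b :: 'a
      have "real_of_int \<lfloor>?c * (x \<bullet> b)\<rfloor> / ?c - x \<bullet> b = (real_of_int \<lfloor>?c * (x \<bullet> b)\<rfloor> - ?c * (x \<bullet> b)) / ?c"
        by (simp add: field_simps)
      moreover have "\<bar>real_of_int \<lfloor>?c * (x \<bullet> b)\<rfloor> - ?c * (x \<bullet> b)\<bar> \<le> 1" by linarith
      ultimately show "\<bar>real_of_int \<lfloor>?c * (x \<bullet> b)\<rfloor> / ?c - x \<bullet> b\<bar> \<le> 1 / ?c"
        by (simp add: divide_right_mono)
    qed
    finally show "norm (grid_round n x - x) \<le> real DIM('a) / ?c" by simp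
  qed
qed

lemma borel_measurable_pair_of_continuous:
  fixes F :: "'a::euclidean_space \<Rightarrow> 'b \<Rightarrow> 'c::metric_space"
  assumes meas: "\<And>x. F x \<in> borel_measurable M"
    and cont: "\<And>s. s \<in> space M \<Longrightarrow> continuous_on UNIV (\<lambda>x. F x s)"
  shows "(\<lambda>z. F (fst z) (snd z)) \<in> borel_measurable (borel \<Otimes>\<^sub>M M)"
proof (rule borel_measurable_LIMSEQ_metric)
  fix n
  show "(\<lambda>z. F (grid_round n (fst z)) (snd z)) \<in> borel_measurable (borel \<Otimes>\<^sub>M M)"
  proof (rule measurable_compose_countable'[OF _ _ countable_range_grid_round])
    show "(\<lambda>z. F a (snd z)) \<in> borel_measurable (borel \<Otimes>\<^sub>M M)" for a
      using meas[of a] by measurable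
    show "(\<lambda>z. grid_round n (fst z)) \<in> measurable (borel \<Otimes>\<^sub>M M) (count_space (range (grid_round n)))"
      using measurable_compose[OF measurable_fst grid_round_measurable_count_space] by (simp add: o_def)
  qed
next
  fix z :: "'a \<times> 'b" assume "z \<in> space (borel \<Otimes>\<^sub>M M)"
  then have "isCont (\<lambda>x. F x (snd z)) (fst z)"
    using cont[of "snd z"] by (auto simp: space_pair_measure continuous_on_eq_continuous_at)
  then show "(\<lambda>n. F (grid_round n (fst z)) (snd z)) \<longlonglongrightarrow> F (fst z) (snd z)"
    using isCont_tendsto_compose grid_round_tendsto by blast
qed

lemma borel_measurable_pair_of_gradient:
  fixes F :: "'a::euclidean_space \<Rightarrow> 'b \<Rightarrow> real" and gF :: "'a \<Rightarrow> 'b \<Rightarrow> 'a"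
  assumes meas: "\<And>x. F x \<in> borel_measurable M"
    and grad: "\<And>x s. s \<in> space M \<Longrightarrow> ((\<lambda>y. F y s) has_derivative (\<lambda>h. gF x s \<bullet> h)) (at x)"
  shows "(\<lambda>z. gF (fst z) (snd z)) \<in> borel_measurable (borel \<Otimes>\<^sub>M M)"
proof -
  have F: "(\<lambda>z. F (fst z) (snd z)) \<in> borel_measurable (borel \<Otimes>\<^sub>M M)"
    using meas has_derivative_continuous[OF grad]
    by (intro borel_measurable_pair_of_continuous) (auto simp: continuous_on_eq_continuous_at)
  have "(\<lambda>z. gF (fst z) (snd z) \<bullet> b) \<in> borel_measurable (borel \<Otimes>\<^sub>M M)" for b
  \<comment> \<open>the directional derivative is a pointwise limit of difference quotients\<close>
  proof (rule borel_measurable_LIMSEQ_real)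
    fix n
    have "(\<lambda>z. (fst z + inverse (real (Suc n)) *\<^sub>R b, snd z)) \<in> measurable (borel \<Otimes>\<^sub>M M) (borel \<Otimes>\<^sub>M M)"
      by measurable
    from measurable_compose[OF this F]
    show "(\<lambda>z. (F (fst z + inverse (real (Suc n)) *\<^sub>R b) (snd z) - F (fst z) (snd z)) / inverse (real (Suc n)))
      \<in> borel_measurable (borel \<Otimes>\<^sub>M M)"
      using F by (intro borel_measurable_divide borel_measurable_diff) (simp_all add: o_def)
  next
    fix z :: "'a \<times> 'b" assume "z \<in> space (borel \<Otimes>\<^sub>M M)"
    then have s: "snd z \<in> space M" by (simp add: space_pair_measure mem_Times_iff)
    have line: "((\<lambda>t. fst z + t *\<^sub>R b) has_derivative (\<lambda>t. t *\<^sub>R b)) (at 0)"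
      by (auto intro!: derivative_eq_intros)
    have "((\<lambda>y. F y (snd z)) has_derivative (\<lambda>h. gF (fst z) (snd z) \<bullet> h)) (at (fst z + 0 *\<^sub>R b))"
      using grad[OF s] by simp
    from has_derivative_compose[OF line this]
    have "((\<lambda>t. F (fst z + t *\<^sub>R b) (snd z)) has_real_derivative gF (fst z) (snd z) \<bullet> b) (at 0)"
      by (simp add: has_field_derivative_def mult_commute_abs)
    then have "((\<lambda>t. (F (fst z + t *\<^sub>R b) (snd z) - F (fst z) (snd z)) / t) \<longlongrightarrow> gF (fst z) (snd z) \<bullet> b) (at 0)"
      by (simp add: DERIV_def)
    moreover have "filterlim (\<lambda>n. inverse (real (Suc n))) (at 0) sequentially"
      using LIMSEQ_inverse_real_of_nat by (auto simp: filterlim_at simp del: of_nat_Suc)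
    ultimately show "(\<lambda>n. (F (fst z + inverse (real (Suc n)) *\<^sub>R b) (snd z) - F (fst z) (snd z)) / inverse (real (Suc n)))
      \<longlonglongrightarrow> gF (fst z) (snd z) \<bullet> b"
      by (rule filterlim_compose)
  qed
  then have "(\<lambda>z. \<Sum>b\<in>Basis. (gF (fst z) (snd z) \<bullet> b) *\<^sub>R b) \<in> borel_measurable (borel \<Otimes>\<^sub>M M)"
    by measurable
  then show ?thesis by (simp add: euclidean_representation)
qed

section \<open>The iterates as functions of the samples\<close>

lemma epi_G_cong:
  "(\<And>j. j < N \<Longrightarrow> xt r j = xt' r j) \<Longrightarrow> epi_G N gF xt r xb = epi_G N gF xt' r xb"
  by (simp add: epi_G_def)

lemma epi_loc_cong:
  assumes "\<And>j. j < N \<Longrightarrow> xt r j = xt' r j" "i < N"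
    and "\<And>m. m < k \<Longrightarrow> xs (r * I + m) i = xs' (r * I + m) i"
  shows "epi_loc N I \<eta> \<gamma> gF xt xs r xb i k = epi_loc N I \<eta> \<gamma> gF xt' xs' r xb i k"
  using assms(3)
proof (induction k)
  case (Suc k)
  then show ?case
    using epi_G_cong[of N xt r xt' gF xb] assms(1,2) by (simp add: Let_def)
qed simp

lemma epi_xbar_cong:
  assumes "\<And>q j. q < r \<Longrightarrow> j < N \<Longrightarrow> xt q j = xt' q j"
    and "\<And>t j. t < r * I \<Longrightarrow> j < N \<Longrightarrow> xs t j = xs' t j"
  shows "epi_xbar N I \<eta> \<gamma> gF xt xs x0 r = epi_xbar N I \<eta> \<gamma> gF xt' xs' x0 r"
  using assms
proof (induction r)
  case (Suc r)
  have "epi_loc N I \<eta> \<gamma> gF xt xs r xb i I = epi_loc N I \<eta> \<gamma> gF xt' xs' r xb i I" if "i < N" for i xb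
    using Suc.prems that by (intro epi_loc_cong) auto
  then show ?case
    using Suc by (simp add: less_Suc_eq)
qed simp

text \<open>The samples of EPISODE as one family: \<open>Inl (q, j)\<close> indexes the sample drawn by client \<open>j\<close>
  at the start of round \<open>q\<close>, \<open>Inr (t, j)\<close> the one drawn at local step \<open>t\<close>.\<close>

definition sample_measure :: "(nat \<Rightarrow> 'b measure) \<Rightarrow> (nat \<times> nat) + (nat \<times> nat) \<Rightarrow> 'b measure" where
  "sample_measure D = (\<lambda>a. case a of Inl (q, j) \<Rightarrow> D j | Inr (t, j) \<Rightarrow> D j)"

definition sample_family ::
  "(nat \<Rightarrow> nat \<Rightarrow> 'w \<Rightarrow> 'b) \<Rightarrow> (nat \<Rightarrow> nat \<Rightarrow> 'w \<Rightarrow> 'b) \<Rightarrow> (nat \<times> nat) + (nat \<times> nat) \<Rightarrow> 'w \<Rightarrow> 'b" where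
  "sample_family Xt Xs = (\<lambda>a \<omega>. case a of Inl (q, j) \<Rightarrow> Xt q j \<omega> | Inr (t, j) \<Rightarrow> Xs t j \<omega>)"

definition sample_indices :: "nat \<Rightarrow> ((nat \<times> nat) + (nat \<times> nat)) set" where
  "sample_indices N = Inl ` (UNIV \<times> {..<N}) \<union> Inr ` (UNIV \<times> {..<N})"

lemma sample_measure_simps [simp]:
  "sample_measure D (Inl (q, j)) = D j" "sample_measure D (Inr (t, j)) = D j"
  by (simp_all add: sample_measure_def)

lemma sample_family_simps [simp]:
  "sample_family Xt Xs (Inl (q, j)) = Xt q j" "sample_family Xt Xs (Inr (t, j)) = Xs t j"
  by (simp_all add: sample_family_def)

lemma measurable_gradient_at:
  assumes "(\<lambda>z. gF (fst z) (snd z)) \<in> borel_measurable (borel \<Otimes>\<^sub>M D)"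
    and "x \<in> borel_measurable M" and "s \<in> measurable M D"
  shows "(\<lambda>p. gF (x p) (s p)) \<in> borel_measurable M"
  using measurable_compose[OF measurable_Pair[OF assms(2,3)] assms(1)] by simp

lemma measurable_epi_G:
  fixes gF :: "nat \<Rightarrow> 'a::{real_normed_vector, second_countable_topology} \<Rightarrow> 'b \<Rightarrow> 'a"
  assumes gF: "\<And>j. j < N \<Longrightarrow> (\<lambda>z. gF j (fst z) (snd z)) \<in> borel_measurable (borel \<Otimes>\<^sub>M D j)"
    and K: "\<And>j. j < N \<Longrightarrow> Inl (r, j) \<in> K"
    and xb: "xb \<in> borel_measurable (PiM K (sample_measure D))"
  shows "(\<lambda>p. epi_G N gF (\<lambda>q j. p (Inl (q, j))) r (xb p)) \<in> borel_measurable (PiM K (sample_measure D))"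
proof -
  have "(\<lambda>p. gF j (xb p) (p (Inl (r, j)))) \<in> borel_measurable (PiM K (sample_measure D))" if "j < N" for j
    using measurable_component_singleton[OF K[OF that], of "sample_measure D"]
    by (intro measurable_gradient_at[OF gF[OF that] xb]) simp
  then show ?thesis
    unfolding epi_G_def by (intro borel_measurable_scaleR borel_measurable_sum) auto
qed

lemma measurable_epi_loc:
  fixes gF :: "nat \<Rightarrow> 'a::{real_normed_vector, second_countable_topology} \<Rightarrow> 'b \<Rightarrow> 'a"
  assumes gF: "\<And>j. j < N \<Longrightarrow> (\<lambda>z. gF j (fst z) (snd z)) \<in> borel_measurable (borel \<Otimes>\<^sub>M D j)"
    and K: "\<And>j. j < N \<Longrightarrow> Inl (r, j) \<in> K" "\<And>m. m < k \<Longrightarrow> Inr (r * I + m, i) \<in> K"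
    and i: "i < N"
    and xb: "xb \<in> borel_measurable (PiM K (sample_measure D))"
  shows "(\<lambda>p. epi_loc N I \<eta> \<gamma> gF (\<lambda>q j. p (Inl (q, j))) (\<lambda>t j. p (Inr (t, j))) r (xb p) i k)
           \<in> borel_measurable (PiM K (sample_measure D))"
  using K(2)
proof (induction k)
  case (Suc k)
  let ?y = "\<lambda>p. epi_loc N I \<eta> \<gamma> gF (\<lambda>q j. p (Inl (q, j))) (\<lambda>t j. p (Inr (t, j))) r (xb p) i k"
  let ?G = "\<lambda>p. epi_G N gF (\<lambda>q j. p (Inl (q, j))) r (xb p)"
  let ?g = "\<lambda>p. gF i (?y p) (p (Inr (r * I + k, i))) - gF i (xb p) (p (Inl (r, i))) + ?G p"
  have y: "?y \<in> borel_measurable (PiM K (sample_measure D))"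
    using Suc by simp
  have G: "?G \<in> borel_measurable (PiM K (sample_measure D))"
    by (rule measurable_epi_G[OF gF K(1) xb])
  have "(\<lambda>p. gF i (?y p) (p (Inr (r * I + k, i)))) \<in> borel_measurable (PiM K (sample_measure D))"
    using measurable_component_singleton[OF Suc.prems[of k], of "sample_measure D"]
    by (intro measurable_gradient_at[OF gF[OF i] y]) simp_all
  moreover have "(\<lambda>p. gF i (xb p) (p (Inl (r, i)))) \<in> borel_measurable (PiM K (sample_measure D))"
    using measurable_component_singleton[OF K(1)[OF i], of "sample_measure D"]
    by (intro measurable_gradient_at[OF gF[OF i] xb]) simp
  ultimately have "?g \<in> borel_measurable (PiM K (sample_measure D))"
    using G by measurable
  then have "(\<lambda>p. if norm (?G p) \<le> \<gamma> / \<eta> then ?y p - \<eta> *\<^sub>R ?g p else ?y p - (\<gamma> / norm (?g p)) *\<^sub>R ?g p)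
      \<in> borel_measurable (PiM K (sample_measure D))"
    using y G by measurable
  then show ?case by (simp add: Let_def)
qed (use xb in simp)

lemma measurable_epi_xbar:
  fixes gF :: "nat \<Rightarrow> 'a::{real_normed_vector, second_countable_topology} \<Rightarrow> 'b \<Rightarrow> 'a"
  assumes gF: "\<And>j. j < N \<Longrightarrow> (\<lambda>z. gF j (fst z) (snd z)) \<in> borel_measurable (borel \<Otimes>\<^sub>M D j)"
    and K: "\<And>q j. q < r \<Longrightarrow> j < N \<Longrightarrow> Inl (q, j) \<in> K"
      "\<And>t j. t < r * I \<Longrightarrow> j < N \<Longrightarrow> Inr (t, j) \<in> K"
  shows "(\<lambda>p. epi_xbar N I \<eta> \<gamma> gF (\<lambda>q j. p (Inl (q, j))) (\<lambda>t j. p (Inr (t, j))) x0 r)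
           \<in> borel_measurable (PiM K (sample_measure D))"
  using K
proof (induction r)
  case (Suc r)
  have "(\<lambda>p. epi_xbar N I \<eta> \<gamma> gF (\<lambda>q j. p (Inl (q, j))) (\<lambda>t j. p (Inr (t, j))) x0 r)
      \<in> borel_measurable (PiM K (sample_measure D))"
    using Suc by (intro Suc.IH) auto
  then have "(\<lambda>p. epi_loc N I \<eta> \<gamma> gF (\<lambda>q j. p (Inl (q, j))) (\<lambda>t j. p (Inr (t, j))) r
      (epi_xbar N I \<eta> \<gamma> gF (\<lambda>q j. p (Inl (q, j))) (\<lambda>t j. p (Inr (t, j))) x0 r) i I)
      \<in> borel_measurable (PiM K (sample_measure D))" if "i < N" for i
    using Suc.prems that by (intro measurable_epi_loc[OF gF]) auto
  then show ?case
    by simp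
qed simp

section \<open>Almost sure noise bounds along a round\<close>

lemma (in prob_space) AE_indep_var_pair:
  assumes indep: "indep_var S Y T Z"
    and P: "Measurable.pred (S \<Otimes>\<^sub>M T) (\<lambda>z. P (fst z) (snd z))"
    and ae: "\<And>y. y \<in> space S \<Longrightarrow> AE \<omega> in M. P y (Z \<omega>)"
  shows "AE \<omega> in M. P (Y \<omega>) (Z \<omega>)"
proof -
  have Y: "random_variable S Y" and Z: "random_variable T Z"
    and joint: "distr M S Y \<Otimes>\<^sub>M distr M T Z = distr M (S \<Otimes>\<^sub>M T) (\<lambda>\<omega>. (Y \<omega>, Z \<omega>))"
    using indep by (simp_all add: indep_var_distribution_eq)
  interpret SY: prob_space "distr M S Y" by (rule prob_space_distr[OF Y])
  interpret TZ: prob_space "distr M T Z" by (rule prob_space_distr[OF Z])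
  interpret pair_prob_space "distr M S Y" "distr M T Z" ..
  have "AE z in distr M S Y \<Otimes>\<^sub>M distr M T Z. P (fst z) (snd z)"
  proof (rule AE_pair_measure)
    show "{z \<in> space (distr M S Y \<Otimes>\<^sub>M distr M T Z). P (fst z) (snd z)} \<in> sets (distr M S Y \<Otimes>\<^sub>M distr M T Z)"
      using P by (simp add: Measurable.pred_def space_pair_measure cong: sets_pair_measure_cong)
    show "AE y in distr M S Y. AE z in distr M T Z. P (fst (y, z)) (snd (y, z))"
    proof (rule AE_I2)
      fix y assume "y \<in> space (distr M S Y)"
      then have y: "y \<in> space S" by simp
      have "Measurable.pred T (P y)"
        using measurable_compose[OF measurable_Pair1'[OF y] P] by simp
      then show "AE z in distr M T Z. P (fst (y, z)) (snd (y, z))"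
        using ae[OF y] by (simp add: AE_distr_iff[OF Z])
    qed
  qed
  then have "AE z in distr M (S \<Otimes>\<^sub>M T) (\<lambda>\<omega>. (Y \<omega>, Z \<omega>)). P (fst z) (snd z)"
    by (simp only: joint)
  then show ?thesis
    using P by (simp add: AE_distr_iff measurable_Pair[OF Y Z])
qed

lemma (in prob_space) AE_fresh_coordinate:
  assumes indep: "indep_vars M' X I" and K: "K \<subseteq> I" "b \<in> I" "b \<notin> K"
    and \<phi>: "\<phi> \<in> measurable (PiM K M') S"
    and P: "Measurable.pred (S \<Otimes>\<^sub>M M' b) (\<lambda>z. P (fst z) (snd z))"
    and ae: "\<And>x. x \<in> space S \<Longrightarrow> AE \<omega> in M. P x (X b \<omega>)"
  shows "AE \<omega> in M. P (\<phi> (\<lambda>a\<in>K. X a \<omega>)) (X b \<omega>)"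
proof -
  have "indep_var (PiM K M') (\<lambda>\<omega>. \<lambda>a\<in>K. X a \<omega>) (PiM {b} M') (\<lambda>\<omega>. \<lambda>a\<in>{b}. X a \<omega>)"
    using K by (intro indep_var_restrict[OF indep]) auto
  moreover have "(\<lambda>z. (\<phi> (fst z), snd z b)) \<in> measurable (PiM K M' \<Otimes>\<^sub>M PiM {b} M') (S \<Otimes>\<^sub>M M' b)"
    using \<phi> by measurable
  from measurable_compose[OF this P]
  have "Measurable.pred (PiM K M' \<Otimes>\<^sub>M PiM {b} M') (\<lambda>z. P (\<phi> (fst z)) (snd z b))"
    by simp
  ultimately have "AE \<omega> in M. P (\<phi> (\<lambda>a\<in>K. X a \<omega>)) ((\<lambda>a\<in>{b}. X a \<omega>) b)"
    by (rule AE_indep_var_pair[where P = "\<lambda>p q. P (\<phi> p) (q b)"]) (simp add: ae measurable_space[OF \<phi>])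
  then show ?thesis by simp
qed

locale episode_sampling = prob_space M for M :: "'w measure" +
  fixes N I :: nat and \<eta> \<gamma> :: real and x0 :: "'a::{real_normed_vector, second_countable_topology}"
    and D :: "nat \<Rightarrow> 'b measure" and Xt Xs :: "nat \<Rightarrow> nat \<Rightarrow> 'w \<Rightarrow> 'b"
    and gF :: "nat \<Rightarrow> 'a \<Rightarrow> 'b \<Rightarrow> 'a" and gf :: "nat \<Rightarrow> 'a \<Rightarrow> 'a" and \<sigma> :: real
  assumes Xt_dist: "\<And>q j. j < N \<Longrightarrow> Xt q j \<in> measurable M (D j) \<and> distr M (D j) (Xt q j) = D j"
    and Xs_dist: "\<And>t j. j < N \<Longrightarrow> Xs t j \<in> measurable M (D j) \<and> distr M (D j) (Xs t j) = D j"
    and indep: "indep_vars (sample_measure D) (sample_family Xt Xs) (sample_indices N)"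
    and gF_measurable: "\<And>j. j < N \<Longrightarrow> (\<lambda>z. gF j (fst z) (snd z)) \<in> borel_measurable (borel \<Otimes>\<^sub>M D j)"
    and gf_measurable: "\<And>j. j < N \<Longrightarrow> gf j \<in> borel_measurable borel"
    and noise: "\<And>j x. j < N \<Longrightarrow> AE s in D j. norm (gF j x s - gf j x) \<le> \<sigma>"
begin

abbreviation samples :: "(nat \<times> nat) + (nat \<times> nat) \<Rightarrow> 'w \<Rightarrow> 'b" where
  "samples \<equiv> sample_family Xt Xs"

lemma AE_noise_at_fresh_sample:
  assumes j: "j < N" and b: "b = Inl (q, j) \<or> b = Inr (t, j)"
    and K: "K \<subseteq> sample_indices N" "b \<notin> K"
    and \<phi>: "\<phi> \<in> borel_measurable (PiM K (sample_measure D))"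
  shows "AE \<omega> in M. norm (gF j (\<phi> (\<lambda>a\<in>K. samples a \<omega>)) (samples b \<omega>) - gf j (\<phi> (\<lambda>a\<in>K. samples a \<omega>))) \<le> \<sigma>"
proof (rule AE_fresh_coordinate[OF indep, where P = "\<lambda>x s. norm (gF j x s - gf j x) \<le> \<sigma>"])
  show "b \<in> sample_indices N"
    using b j by (auto simp: sample_indices_def)
  have D_b: "sample_measure D b = D j"
    and X: "samples b \<in> measurable M (D j)" "distr M (D j) (samples b) = D j"
    using b Xt_dist[OF j] Xs_dist[OF j] by auto
  show "Measurable.pred (borel \<Otimes>\<^sub>M sample_measure D b) (\<lambda>z. norm (gF j (fst z) (snd z) - gf j (fst z)) \<le> \<sigma>)"
    using gF_measurable[OF j] gf_measurable[OF j] unfolding D_b by measurable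
  fix x :: 'a
  have "gF j x \<in> borel_measurable (D j)"
    using measurable_compose[OF measurable_Pair1'[of x borel] gF_measurable[OF j]] by (simp add: o_def)
  then have good: "{s \<in> space (D j). norm (gF j x s - gf j x) \<le> \<sigma>} \<in> sets (D j)"
    by measurable
  have "AE s in distr M (D j) (samples b). norm (gF j x s - gf j x) \<le> \<sigma>"
    unfolding X(2) by (rule noise[OF j])
  then show "AE \<omega> in M. norm (gF j x (samples b \<omega>) - gf j x) \<le> \<sigma>"
    by (rule iffD1[OF AE_distr_iff[OF X(1) good]])
qed (use K \<phi> in auto)

definition xbar :: "nat \<Rightarrow> 'w \<Rightarrow> 'a" where
  "xbar r \<omega> = epi_xbar N I \<eta> \<gamma> gF (\<lambda>q j. Xt q j \<omega>) (\<lambda>t j. Xs t j \<omega>) x0 r"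

definition xloc :: "nat \<Rightarrow> nat \<Rightarrow> nat \<Rightarrow> 'w \<Rightarrow> 'a" where
  "xloc r i m \<omega> = epi_loc N I \<eta> \<gamma> gF (\<lambda>q j. Xt q j \<omega>) (\<lambda>t j. Xs t j \<omega>) r (xbar r \<omega>) i m"

definition xbar_of_samples :: "nat \<Rightarrow> ((nat \<times> nat) + (nat \<times> nat) \<Rightarrow> 'b) \<Rightarrow> 'a" where
  "xbar_of_samples r p = epi_xbar N I \<eta> \<gamma> gF (\<lambda>q j. p (Inl (q, j))) (\<lambda>t j. p (Inr (t, j))) x0 r"

definition past_samples :: "nat \<Rightarrow> ((nat \<times> nat) + (nat \<times> nat)) set" where
  "past_samples r = Inl ` ({..<r} \<times> {..<N}) \<union> Inr ` ({..<r * I} \<times> {..<N})"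

lemma xbar_of_samples_eq:
  assumes "past_samples r \<subseteq> K"
  shows "xbar_of_samples r (\<lambda>a\<in>K. samples a \<omega>) = xbar r \<omega>"
  unfolding xbar_of_samples_def xbar_def
  using assms by (intro epi_xbar_cong) (auto simp: past_samples_def sample_family_def image_subset_iff)

lemma measurable_xbar_of_samples:
  "past_samples r \<subseteq> K \<Longrightarrow> xbar_of_samples r \<in> borel_measurable (PiM K (sample_measure D))"
  unfolding xbar_of_samples_def
  by (rule measurable_epi_xbar[OF gF_measurable]) (auto simp: past_samples_def)

lemma AE_noise_bounded_at_round_start:
  "AE \<omega> in M. \<forall>j<N. norm (gF j (xbar r \<omega>) (Xt r j \<omega>) - gf j (xbar r \<omega>)) \<le> \<sigma>"
proof -
  have "AE \<omega> in M. \<forall>j\<in>{..<N}. norm (gF j (xbar r \<omega>) (Xt r j \<omega>) - gf j (xbar r \<omega>)) \<le> \<sigma>"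
  proof (rule AE_finite_allI)
    fix j assume "j \<in> {..<N}"
    then have "AE \<omega> in M. norm (gF j (xbar_of_samples r (\<lambda>a\<in>past_samples r. samples a \<omega>)) (samples (Inl (r, j)) \<omega>)
                 - gf j (xbar_of_samples r (\<lambda>a\<in>past_samples r. samples a \<omega>))) \<le> \<sigma>"
      by (intro AE_noise_at_fresh_sample measurable_xbar_of_samples)
        (auto simp: past_samples_def sample_indices_def)
    then show "AE \<omega> in M. norm (gF j (xbar r \<omega>) (Xt r j \<omega>) - gf j (xbar r \<omega>)) \<le> \<sigma>"
      unfolding xbar_of_samples_eq[OF order_refl] by (simp add: sample_family_def)
  qed simp
  then show ?thesis by (rule eventually_mono) simp
qed

lemma AE_noise_bounded_along_round:
  assumes i: "i < N"
  shows "AE \<omega> in M. \<forall>m<I. norm (gF i (xloc r i m \<omega>) (Xs (r * I + m) i \<omega>) - gf i (xloc r i m \<omega>)) \<le> \<sigma>"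
proof -
  have "AE \<omega> in M. \<forall>m\<in>{..<I}. norm (gF i (xloc r i m \<omega>) (Xs (r * I + m) i \<omega>) - gf i (xloc r i m \<omega>)) \<le> \<sigma>"
  proof (rule AE_finite_allI)
    fix m
    define K where "K = past_samples r \<union> Inl ` ({r} \<times> {..<N}) \<union> Inr ` ({r * I..<r * I + m} \<times> {..<N})"
    define \<phi> where "\<phi> p = epi_loc N I \<eta> \<gamma> gF (\<lambda>q j. p (Inl (q, j))) (\<lambda>t j. p (Inr (t, j))) r
      (xbar_of_samples r p) i m" for p
    have past: "past_samples r \<subseteq> K" by (auto simp: K_def)
    have \<phi>_eq: "\<phi> (\<lambda>a\<in>K. samples a \<omega>) = xloc r i m \<omega>" for \<omega>
      unfolding \<phi>_def xloc_def xbar_of_samples_eq[OF past] using i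
      by (intro epi_loc_cong) (auto simp: K_def sample_family_def)
    have "\<phi> \<in> borel_measurable (PiM K (sample_measure D))"
      unfolding \<phi>_def using i
      by (intro measurable_epi_loc[OF gF_measurable] measurable_xbar_of_samples[OF past]) (auto simp: K_def)
    then have "AE \<omega> in M. norm (gF i (\<phi> (\<lambda>a\<in>K. samples a \<omega>)) (samples (Inr (r * I + m, i)) \<omega>)
                 - gf i (\<phi> (\<lambda>a\<in>K. samples a \<omega>))) \<le> \<sigma>"
      using i by (intro AE_noise_at_fresh_sample) (auto simp: K_def past_samples_def sample_indices_def)
    then show "AE \<omega> in M. norm (gF i (xloc r i m \<omega>) (Xs (r * I + m) i \<omega>) - gf i (xloc r i m \<omega>)) \<le> \<sigma>"
      unfolding \<phi>_eq by (simp add: sample_family_def)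
  qed simp
  then show ?thesis by (rule eventually_mono) simp
qed

end

theorem lemma1:
  fixes N I :: nat
    and \<eta> \<gamma> L0 L1 \<sigma> \<kappa> \<rho> C :: real
    and f :: "nat \<Rightarrow> 'a::euclidean_space \<Rightarrow> real"
    and gf :: "nat \<Rightarrow> 'a \<Rightarrow> 'a"
    and Hf :: "nat \<Rightarrow> 'a \<Rightarrow> 'a \<Rightarrow> 'a"
    and F :: "nat \<Rightarrow> 'a \<Rightarrow> 'b \<Rightarrow> real"
    and gF :: "nat \<Rightarrow> 'a \<Rightarrow> 'b \<Rightarrow> 'a"
    and D :: "nat \<Rightarrow> 'b measure"
    and M :: "'w measure"
    and Xt :: "nat \<Rightarrow> nat \<Rightarrow> 'w \<Rightarrow> 'b"
    and Xs :: "nat \<Rightarrow> nat \<Rightarrow> 'w \<Rightarrow> 'b"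
    and x0 :: 'a
    and r i k :: nat
  assumes N_pos: "N \<ge> 1" and I_pos: "I \<ge> 1"
    and eta_pos: "\<eta> > 0" and gamma_pos: "\<gamma> > 0"
    and L0_nn: "L0 \<ge> 0" and L1_pos: "L1 > 0"
    and sigma_nn: "\<sigma> \<ge> 0" and kappa_nn: "\<kappa> \<ge> 0" and rho_ge: "\<rho> \<ge> 1"
    and D_prob: "\<And>j. j < N \<Longrightarrow> prob_space (D j)"
    \<comment> \<open>F_i(\<cdot>;\<xi>) is differentiable with gradient gF i \<cdot> \<xi>\<close>
    and F_grad: "\<And>j x s. j < N \<Longrightarrow> s \<in> space (D j) \<Longrightarrow>
        ((\<lambda>y. F j y s) has_derivative (\<lambda>h. gF j x s \<bullet> h)) (at x)"
    \<comment> \<open>f_i = E[F_i]\<close>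
    and f_def: "\<And>j x. j < N \<Longrightarrow> integrable (D j) (F j x) \<and> f j x = integral\<^sup>L (D j) (F j x)"
    \<comment> \<open>f_i twice differentiable: gradient gf, Hessian Hf\<close>
    and f_grad: "\<And>j x. j < N \<Longrightarrow> (f j has_derivative (\<lambda>h. gf j x \<bullet> h)) (at x)"
    and f_hess: "\<And>j x. j < N \<Longrightarrow> (gf j has_derivative Hf j x) (at x)"
    and smooth: "\<And>j x. j < N \<Longrightarrow> onorm (Hf j x) \<le> L0 + L1 * norm (gf j x)"
    \<comment> \<open>unbiasedness and a.s. bounded noise\<close>
    and unbiased: "\<And>j x. j < N \<Longrightarrow> integrable (D j) (gF j x) \<and> integral\<^sup>L (D j) (gF j x) = gf j x"
    and noise: "\<And>j x. j < N \<Longrightarrow> AE s in D j. norm (gF j x s - gf j x) \<le> \<sigma>"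
    \<comment> \<open>heterogeneity, with \<nabla>f = (1/N) \<Sum> \<nabla>f_i\<close>
    and hetero: "\<And>j x. j < N \<Longrightarrow>
        norm (gf j x) \<le> \<kappa> + \<rho> * norm ((1 / real N) *\<^sub>R (\<Sum>l<N. gf l x))"
    \<comment> \<open>sampling: all samples independent, client j samples from D j\<close>
    and M_prob: "prob_space M"
    and Xt_dist: "\<And>q j. j < N \<Longrightarrow> Xt q j \<in> measurable M (D j) \<and> distr M (D j) (Xt q j) = D j"
    and Xs_dist: "\<And>t j. j < N \<Longrightarrow> Xs t j \<in> measurable M (D j) \<and> distr M (D j) (Xs t j) = D j"
    and indep: "prob_space.indep_vars M
        (\<lambda>a. case a of Inl (q, j) \<Rightarrow> D j | Inr (t, j) \<Rightarrow> D j)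
        (\<lambda>a \<omega>. case a of Inl (q, j) \<Rightarrow> Xt q j \<omega> | Inr (t, j) \<Rightarrow> Xs t j \<omega>)
        (Inl ` (UNIV \<times> {..<N}) \<union> Inr ` (UNIV \<times> {..<N}))"
    \<comment> \<open>step-size conditions\<close>
    and C_ge: "C \<ge> 1"
    and cond1: "2 * \<eta> * real I * ((1 + exp C - (exp C - 1) / C) * L0
                 + ((exp C - 1) / C) * L1 * \<kappa>
                 + ((exp C - 1) / C) * L1 * \<rho> * (\<sigma> + \<gamma> / \<eta>)) \<le> 1"
    and cond2: "max (2 * \<eta> * real I * (2 * \<sigma> + \<gamma> / \<eta>)) (\<gamma> * real I) \<le> C / L1"
    \<comment> \<open>t = rI + k with t - 1 \<in> I_r, i.e. 1 \<le> k \<le> I\<close>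
    and i_lt: "i < N" and k_ge: "1 \<le> k" and k_le: "k \<le> I"
  shows "AE \<omega> in M.
    (let xt = (\<lambda>q j. Xt q j \<omega>); xs = (\<lambda>t j. Xs t j \<omega>);
         xb = epi_xbar N I \<eta> \<gamma> gF xt xs x0 r;
         xit = epi_loc N I \<eta> \<gamma> gF xt xs r xb i k;
         A = (norm (epi_G N gF xt r xb) \<le> \<gamma> / \<eta>)
     in of_bool A * norm (xit - xb) \<le> 2 * \<eta> * real I * (2 * \<sigma> + \<gamma> / \<eta>)
      \<and> of_bool (\<not> A) * norm (xit - xb) \<le> \<gamma> * real I)"
proof -
  interpret episode_sampling M N I \<eta> \<gamma> x0 D Xt Xs gF gf \<sigma>
  proof (intro episode_sampling.intro episode_sampling_axioms.intro M_prob)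
    show "(\<lambda>z. gF j (fst z) (snd z)) \<in> borel_measurable (borel \<Otimes>\<^sub>M D j)" if "j < N" for j
      using f_def F_grad that by (intro borel_measurable_pair_of_gradient[of "F j"]) auto
    show "gf j \<in> borel_measurable borel" if "j < N" for j
      using has_derivative_continuous[OF f_hess[OF that]]
      by (intro borel_measurable_continuous_onI) (simp add: continuous_on_eq_continuous_at)
  qed (use Xt_dist Xs_dist indep noise in
      \<open>simp_all add: sample_measure_def sample_family_def sample_indices_def\<close>)
  have C_pos: "C > 0" and rho_nn: "\<rho> \<ge> 0" using C_ge rho_ge by simp_all
  note deviation_bound = norm_epi_loc_diff_le[where gf = gf, OF eta_pos less_imp_le[OF gamma_pos]
      L0_nn L1_pos rho_nn C_pos f_hess[OF i_lt] smooth[OF i_lt] hetero[OF i_lt] cond1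
      order.trans[OF max.cobounded1 cond2] i_lt k_le]
  show ?thesis
    by (rule eventually_mono[OF AE_conjI[OF AE_noise_bounded_at_round_start[of r]
          AE_noise_bounded_along_round[OF i_lt, of r]]], unfold Let_def, rule deviation_bound)
      (use k_le in \<open>auto simp: xbar_def xloc_def\<close>)
qed

end
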